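(* Let $\Gamma=\langle S|R\rangle$ be a Coxeter group with its standard Coxeter generating set $S$. The word metric on $\Gamma$ with respect to $S$ is conditionally strictly negative definite if and only if $\Gamma$ is a free Coxeter group, i.e. $\Gamma=\ast_{i=1}^n\mathbb{Z}/2\mathbb{Z}$ (all coefficients $m_{s,t}=\infty$). Let $\Gamma=\langle S|R\rangle$ be an Artin group with its standard generating set $S$. The word metric on $\Gamma$ with respect to $S$ is conditionally strictly negative definite if and only if $\Gamma$ is a free group, i.e. $\Gamma=\ast_{i=1}^n\mathbb{Z}$ (all coefficients $m_{s,t}=\infty$).
   Context: A hermitian kernel $K\colon X\times X\to\mathbb{C}$ is conditionally strictly negative definite if $\sum_{x,y\in X}\lambda(x)\overline{\lambda(y)}K(x,y)<0$ for every nonzero finitely supported $\lambda\colon X\to\mathbb{C}$ with $\sum_{x}\lambda(x)=0$. For a semigroup element pair $s,t$ and $k\in\mathbb{N}$, the alternating product $\langle s,t\rangle^k$ denotes the word $stst\ldots$ of length $k$ starting with $s$. Given a set $S$ and coefficients $m_{s,t}=m_{t,s}\in\{2,3,\ldots\}\cup\{\infty\}$ for $s\neq t\in S$, the Artin group is $\langle S\mid \langle s,t\rangle^{m_{s,t}}=\langle t,s\rangle^{m_{s,t}}\ (s\neq t)\rangle$, where $m_{s,t}=\infty$ means no such relation is imposed; the corresponding Coxeter group is its quotient by the normal subgroup generated by $\{s^2:s\in S\}$. The word metric is the path metric on the Cayley graph with respect to $S$. *)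

theory Defs
  imports Complex_Main "HOL-Library.Extended_Nat"
begin

text \<open>Words in a free monoid on letters S and their formal inverses:
  (s, True) stands for s, (s, False) for s^-1.\<close>
type_synonym 'a word = "('a \<times> bool) list"

definition word_over :: "'a set \<Rightarrow> 'a word \<Rightarrow> bool" where
  "word_over S w \<longleftrightarrow> fst ` set w \<subseteq> S"

inductive pres_eq :: "('a word \<times> 'a word) set \<Rightarrow> 'a word \<Rightarrow> 'a word \<Rightarrow> bool"
  for R where
  refl: "pres_eq R w w"
| sym: "pres_eq R u v \<Longrightarrow> pres_eq R v u"
| trans: "pres_eq R u v \<Longrightarrow> pres_eq R v w \<Longrightarrow> pres_eq R u w"
| cancel: "pres_eq R (u @ [(s, b), (s, \<not> b)] @ v) (u @ v)"
| rel: "(l, r) \<in> R \<Longrightarrow> pres_eq R (u @ l @ v) (u @ r @ v)"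

definition group_elems :: "('a word \<times> 'a word) set \<Rightarrow> 'a set \<Rightarrow> 'a word set set" where
  "group_elems R S = {{v. word_over S v \<and> pres_eq R u v} | u. word_over S u}"

definition word_dist :: "('a word \<times> 'a word) set \<Rightarrow> 'a set \<Rightarrow> 'a word set \<Rightarrow> 'a word set \<Rightarrow> nat" where
  "word_dist R S g h = (LEAST n. \<exists>u\<in>g. \<exists>v\<in>h. \<exists>w. word_over S w \<and> length w = n \<and> pres_eq R (u @ w) v)"

fun alt :: "'a \<Rightarrow> 'a \<Rightarrow> nat \<Rightarrow> 'a word" where
  "alt s t 0 = []"
| "alt s t (Suc k) = (s, True) # alt t s k"

definition coxeter_matrix :: "'a set \<Rightarrow> ('a \<Rightarrow> 'a \<Rightarrow> enat) \<Rightarrow> bool" where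
  "coxeter_matrix S m \<longleftrightarrow> (\<forall>s\<in>S. \<forall>t\<in>S. s \<noteq> t \<longrightarrow> m s t = m t s \<and> m s t \<ge> 2)"

definition artin_rels :: "'a set \<Rightarrow> ('a \<Rightarrow> 'a \<Rightarrow> enat) \<Rightarrow> ('a word \<times> 'a word) set" where
  "artin_rels S m = {(alt s t k, alt t s k) | s t k. s \<in> S \<and> t \<in> S \<and> s \<noteq> t \<and> m s t = enat k}"

definition coxeter_rels :: "'a set \<Rightarrow> ('a \<Rightarrow> 'a \<Rightarrow> enat) \<Rightarrow> ('a word \<times> 'a word) set" where
  "coxeter_rels S m = artin_rels S m \<union> {([(s, True), (s, True)], []) | s. s \<in> S}"

definition cond_strict_neg_def :: "'x set \<Rightarrow> ('x \<Rightarrow> 'x \<Rightarrow> complex) \<Rightarrow> bool" where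
  "cond_strict_neg_def X K \<longleftrightarrow>
     (\<forall>c :: 'x \<Rightarrow> complex.
        finite {x. c x \<noteq> 0} \<and> {x. c x \<noteq> 0} \<subseteq> X \<and> {x. c x \<noteq> 0} \<noteq> {}
        \<and> (\<Sum>x\<in>{x. c x \<noteq> 0}. c x) = 0 \<longrightarrow>
        (let q = (\<Sum>x\<in>{x. c x \<noteq> 0}. \<Sum>y\<in>{x. c x \<noteq> 0}. c x * cnj (c y) * K x y)
         in q \<in> \<real> \<and> Re q < 0))"

end

theory Submission
  imports Defs
begin

text \<open>
  For a free group or a free Coxeter group every element has a unique reduced word, and the word
  metric is the path metric of a tree: \<open>d(g, h) = |x| + |y| - 2 lcp(x, y)\<close> for the reduced words \<open>x\<close>,
  \<open>y\<close> of \<open>g\<close>, \<open>h\<close> and the length \<open>lcp(x, y)\<close> of their longest common prefix. This counts the nonempty words that are a prefix of exactly one of \<open>x\<close>, \<open>y\<close>, so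
  the kernel is a sum of cut kernels, each conditionally negative definite; strictness comes from a
  longest word of the support, which is a prefix of no other one.

  If some \<open>m s t = k\<close> is finite, the elements \<open>1\<close>, \<open>s\<close>, \<open>sts\<dots>\<close> (\<open>k\<close> letters) and \<open>tst\<dots>\<close>
  (\<open>k - 1\<close> letters) form a quadrilateral with sides \<open>1, k - 1, 1, k - 1\<close> and diagonals of length
  at least \<open>k\<close>, so the weights \<open>1, -1, 1, -1\<close> give a nonnegative form. The lower bound on the
  diagonals is proved in the Coxeter group, a quotient of the Artin group, by Tits' reflection
  counting: the \<open>k\<close> reflections \<open>(st)\<^sup>i s\<close>, \<open>i < k\<close>, are distinct because \<open>st\<close> acts as a rotation of
  order exactly \<open>k\<close> in the geometric representation.
\<close>

section \<open>Presented groups and word metrics\<close>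

declare pres_eq.refl [simp] pres_eq.trans [trans]

lemma pres_eq_context: "pres_eq R x y \<Longrightarrow> pres_eq R (u @ x @ v) (u @ y @ v)"
proof (induction rule: pres_eq.induct)
  case (cancel u' s b v')
  have "pres_eq R ((u @ u') @ [(s, b), (s, \<not> b)] @ (v' @ v)) ((u @ u') @ (v' @ v))"
    by (rule pres_eq.cancel)
  then show ?case by simp
next
  case (rel l r u' v')
  have "pres_eq R ((u @ u') @ l @ (v' @ v)) ((u @ u') @ r @ (v' @ v))"
    using rel by (rule pres_eq.rel)
  then show ?case by simp
qed (metis pres_eq.intros)+

lemma pres_eq_append: "pres_eq R x x' \<Longrightarrow> pres_eq R y y' \<Longrightarrow> pres_eq R (x @ y) (x' @ y')"
  using pres_eq_context[of R x x' "[]" y] pres_eq_context[of R y y' x' "[]"]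
  by (metis append_Nil append_Nil2 pres_eq.trans)

lemma pres_eq_append_left: "pres_eq R y y' \<Longrightarrow> pres_eq R (x @ y) (x @ y')"
  by (simp add: pres_eq_append)

lemma pres_eq_append_right: "pres_eq R x x' \<Longrightarrow> pres_eq R (x @ y) (x' @ y)"
  by (simp add: pres_eq_append)

lemma pres_eq_mono: "pres_eq R x y \<Longrightarrow> R \<subseteq> R' \<Longrightarrow> pres_eq R' x y"
  by (induction rule: pres_eq.induct) (metis pres_eq.intros subsetD)+

definition inv_letter :: "'a \<times> bool \<Rightarrow> 'a \<times> bool" where
  "inv_letter a = (fst a, \<not> snd a)"

definition word_inv :: "'a word \<Rightarrow> 'a word" where
  "word_inv w = rev (map inv_letter w)"

lemma inv_letter_inv_letter [simp]: "inv_letter (inv_letter a) = a"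
  by (simp add: inv_letter_def)

lemma fst_inv_letter [simp]: "fst (inv_letter a) = fst a"
  by (simp add: inv_letter_def)

lemma word_inv_Nil [simp]: "word_inv [] = []"
  and word_inv_Cons [simp]: "word_inv (a # w) = word_inv w @ [inv_letter a]"
  and word_inv_append [simp]: "word_inv (u @ v) = word_inv v @ word_inv u"
  and length_word_inv [simp]: "length (word_inv w) = length w"
  by (simp_all add: word_inv_def)

lemma word_inv_word_inv [simp]: "word_inv (word_inv w) = w"
  by (simp add: word_inv_def rev_map[symmetric] o_def)

lemma word_over_Nil [simp]: "word_over S []"
  and word_over_Cons [simp]: "word_over S (a # v) \<longleftrightarrow> fst a \<in> S \<and> word_over S v"
  and word_over_append [simp]: "word_over S (u @ v) \<longleftrightarrow> word_over S u \<and> word_over S v"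
  and word_over_word_inv [simp]: "word_over S (word_inv w) \<longleftrightarrow> word_over S w"
  by (auto simp: word_over_def word_inv_def image_image)

lemma pres_eq_inv_letter: "pres_eq R [a, inv_letter a] []"
  using pres_eq.cancel[of R "[]" "fst a" "snd a" "[]"] by (simp add: inv_letter_def)

lemma pres_eq_word_inv_right: "pres_eq R (w @ word_inv w) []"
proof (induction w)
  case (Cons a w)
  have "pres_eq R ([a] @ (w @ word_inv w) @ [inv_letter a]) ([a] @ [] @ [inv_letter a])"
    using pres_eq_context[OF Cons.IH] .
  also have "pres_eq R ([a] @ [] @ [inv_letter a]) []"
    using pres_eq_inv_letter by simp
  finally show ?case by simp
qed simp

lemma pres_eq_word_inv_left: "pres_eq R (word_inv w @ w) []"
  using pres_eq_word_inv_right[of R "word_inv w"] by simp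

lemma pres_eq_cancel_right: "pres_eq R (x @ u) (y @ u) \<Longrightarrow> pres_eq R x y"
proof -
  assume h: "pres_eq R (x @ u) (y @ u)"
  have "pres_eq R x (x @ u @ word_inv u)"
    using pres_eq_append_left[OF pres_eq.sym[OF pres_eq_word_inv_right[of R u]], of x] by simp
  also have "pres_eq R (x @ u @ word_inv u) (y @ u @ word_inv u)"
    using pres_eq_append_right[OF h, of "word_inv u"] by simp
  also have "pres_eq R (y @ u @ word_inv u) y"
    using pres_eq_append_left[OF pres_eq_word_inv_right[of R u], of y] by simp
  finally show ?thesis .
qed

lemma pres_eq_move_left: "pres_eq R (u @ w) v \<Longrightarrow> pres_eq R w (word_inv u @ v)"
proof -
  assume h: "pres_eq R (u @ w) v"
  have "pres_eq R w (word_inv u @ u @ w)"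
    using pres_eq_append_right[OF pres_eq.sym[OF pres_eq_word_inv_left[of R u]], of w] by simp
  also have "pres_eq R (word_inv u @ u @ w) (word_inv u @ v)"
    using pres_eq_append_left[OF h] .
  finally show ?thesis .
qed

lemma pres_eq_word_inv: "pres_eq R x y \<Longrightarrow> pres_eq R (word_inv x) (word_inv y)"
proof -
  assume xy: "pres_eq R x y"
  have "pres_eq R (y @ word_inv x) (x @ word_inv x)"
    using pres_eq_append_right[OF pres_eq.sym[OF xy]] .
  also have "pres_eq R (x @ word_inv x) []" by (rule pres_eq_word_inv_right)
  finally show ?thesis using pres_eq_move_left[of R y "word_inv x" "[]"] by simp
qed

lemma word_over_mono: "set v \<subseteq> set w \<Longrightarrow> word_over S w \<Longrightarrow> word_over S v"
  unfolding word_over_def by blast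

definition word_class :: "('a word \<times> 'a word) set \<Rightarrow> 'a set \<Rightarrow> 'a word \<Rightarrow> 'a word set" where
  "word_class R S u = {w. word_over S w \<and> pres_eq R u w}"

lemma word_class_in_group_elems: "word_over S u \<Longrightarrow> word_class R S u \<in> group_elems R S"
  unfolding word_class_def group_elems_def by blast

lemma group_elemsE:
  assumes "g \<in> group_elems R S"
  obtains u where "word_over S u" "g = word_class R S u"
  using assms unfolding group_elems_def word_class_def by blast

lemma word_class_eq: "pres_eq R u v \<Longrightarrow> word_class R S u = word_class R S v"
  unfolding word_class_def by (blast intro: pres_eq.trans pres_eq.sym)

lemma word_dist_word_class:
  assumes "word_over S u" "word_over S v"
  shows "word_dist R S (word_class R S u) (word_class R S v)
       = (LEAST n. \<exists>w. word_over S w \<and> length w = n \<and> pres_eq R (u @ w) v)"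
  unfolding word_dist_def
proof (intro arg_cong[where f = Least] ext iffI)
  fix n
  assume "\<exists>u'\<in>word_class R S u. \<exists>v'\<in>word_class R S v. \<exists>w. word_over S w \<and> length w = n \<and> pres_eq R (u' @ w) v'"
  then obtain u' v' w where "pres_eq R u u'" "pres_eq R v v'" "word_over S w" "length w = n"
    and uv': "pres_eq R (u' @ w) v'"
    by (auto simp: word_class_def)
  moreover have "pres_eq R (u @ w) v"
  proof -
    have "pres_eq R (u @ w) (u' @ w)" by (rule pres_eq_append_right) fact
    also note uv'
    also have "pres_eq R v' v" by (rule pres_eq.sym) fact
    finally show ?thesis .
  qed
  ultimately show "\<exists>w. word_over S w \<and> length w = n \<and> pres_eq R (u @ w) v" by blast
next
  fix n assume "\<exists>w. word_over S w \<and> length w = n \<and> pres_eq R (u @ w) v"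
  moreover have "u \<in> word_class R S u" "v \<in> word_class R S v"
    using assms by (simp_all add: word_class_def)
  ultimately show "\<exists>u'\<in>word_class R S u. \<exists>v'\<in>word_class R S v. \<exists>w. word_over S w \<and> length w = n \<and> pres_eq R (u' @ w) v'"
    by blast
qed

lemma word_dist_le:
  assumes "word_over S u" "word_over S v" "word_over S w" "pres_eq R (u @ w) v"
  shows "word_dist R S (word_class R S u) (word_class R S v) \<le> length w"
  unfolding word_dist_word_class[OF assms(1,2)] by (rule Least_le) (use assms(3,4) in blast)

lemma word_dist_ge:
  assumes "word_over S u" "word_over S v"
    and "\<And>w. word_over S w \<Longrightarrow> pres_eq R (u @ w) v \<Longrightarrow> n \<le> length w"
  shows "n \<le> word_dist R S (word_class R S u) (word_class R S v)"
proof -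
  have "pres_eq R (u @ word_inv u @ v) ([] @ v)"
    using pres_eq_append_right[OF pres_eq_word_inv_right[of R u]] by simp
  then have "\<exists>n w. word_over S w \<and> length w = n \<and> pres_eq R (u @ w) v"
    using assms(1,2) by (intro exI[of _ "length (word_inv u @ v)"] exI[of _ "word_inv u @ v"]) simp
  then show ?thesis
    unfolding word_dist_word_class[OF assms(1,2)] by (rule LeastI2_ex) (use assms(3) in blast)
qed

lemma word_dist_self: "word_over S u \<Longrightarrow> word_dist R S (word_class R S u) (word_class R S u) = 0"
  using word_dist_le[of S u u "[]" R] by simp

lemma word_dist_sym:
  assumes "word_over S u" "word_over S v"
  shows "word_dist R S (word_class R S u) (word_class R S v) = word_dist R S (word_class R S v) (word_class R S u)"
proof -
  have flip: "\<exists>w. word_over S w \<and> length w = n \<and> pres_eq R (y @ w) x"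
    if "\<exists>w. word_over S w \<and> length w = n \<and> pres_eq R (x @ w) y" for x y n
  proof -
    from that obtain w where w: "word_over S w" "length w = n" "pres_eq R (x @ w) y" by blast
    have "pres_eq R (y @ word_inv w) (x @ w @ word_inv w)"
      using pres_eq_append_right[OF pres_eq.sym[OF w(3)], of "word_inv w"] by simp
    also have "pres_eq R (x @ w @ word_inv w) (x @ [])"
      by (rule pres_eq_append_left, rule pres_eq_word_inv_right)
    finally show ?thesis using w by (intro exI[of _ "word_inv w"]) simp
  qed
  show ?thesis
    unfolding word_dist_word_class[OF assms] word_dist_word_class[OF assms(2,1)]
    by (intro arg_cong[where f = Least] ext iffI) (use flip in blast)+
qed

section \<open>Free reduction\<close>

fun reduce_cons :: "('b \<Rightarrow> 'b) \<Rightarrow> 'b \<Rightarrow> 'b list \<Rightarrow> 'b list" where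
  "reduce_cons f a [] = [a]"
| "reduce_cons f a (b # w) = (if b = f a then w else a # b # w)"

fun reduce :: "('b \<Rightarrow> 'b) \<Rightarrow> 'b list \<Rightarrow> 'b list" where
  "reduce f [] = []"
| "reduce f (a # w) = reduce_cons f a (reduce f w)"

fun reduced :: "('b \<Rightarrow> 'b) \<Rightarrow> 'b list \<Rightarrow> bool" where
  "reduced f [] = True"
| "reduced f [a] = True"
| "reduced f (a # b # w) \<longleftrightarrow> b \<noteq> f a \<and> reduced f (b # w)"

lemma reduced_Cons_tl: "reduced f (a # w) \<Longrightarrow> reduced f w"
  by (cases w) auto

lemma reduced_reduce_cons: "reduced f w \<Longrightarrow> reduced f (reduce_cons f a w)"
  by (cases w) (auto dest: reduced_Cons_tl)

lemma reduced_reduce: "reduced f (reduce f w)"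
  by (induction w) (auto intro: reduced_reduce_cons)

lemma reduce_reduced: "reduced f w \<Longrightarrow> reduce f w = w"
proof (induction w)
  case (Cons a w)
  then have "reduce f w = w" using reduced_Cons_tl by metis
  then show ?case using Cons.prems by (cases w) auto
qed simp

lemma length_reduce: "length (reduce f w) \<le> length w"
proof (induction w)
  case (Cons a w)
  have "length (reduce_cons f a v) \<le> Suc (length v)" for v
    by (cases v) auto
  then show ?case using Cons order_trans by fastforce
qed simp

lemma set_reduce: "set (reduce f w) \<subseteq> set w"
proof (induction w)
  case (Cons a w)
  have "set (reduce_cons f a v) \<subseteq> insert a (set v)" for v
    by (cases v) auto
  then show ?case using Cons by fastforce
qed simp

lemma reduced_append:
  "reduced f u \<Longrightarrow> reduced f v \<Longrightarrow> (u \<noteq> [] \<Longrightarrow> v \<noteq> [] \<Longrightarrow> hd v \<noteq> f (last u))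
   \<Longrightarrow> reduced f (u @ v)"
proof (induction u rule: induct_list012)
  case (2 a)
  then show ?case by (cases v) auto
next
  case (3 a b u)
  then show ?case by (auto dest: reduced_Cons_tl)
qed simp

fun lcp :: "'b list \<Rightarrow> 'b list \<Rightarrow> nat" where
  "lcp (a # x) (b # y) = (if a = b then Suc (lcp x y) else 0)"
| "lcp _ _ = 0"

lemma lcp_le: "lcp x y \<le> length x" "lcp x y \<le> length y"
  by (induction x y rule: lcp.induct) auto

lemma take_lcp: "take (lcp x y) x = take (lcp x y) y"
  by (induction x y rule: lcp.induct) auto

lemma le_lcp_if_take_eq: "i \<le> length x \<Longrightarrow> i \<le> length y \<Longrightarrow> take i x = take i y \<Longrightarrow> i \<le> lcp x y"
proof (induction x y arbitrary: i rule: lcp.induct)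
  case (1 a x b y)
  then show ?case by (cases i) auto
qed auto

locale involution =
  fixes f :: "'b \<Rightarrow> 'b"
  assumes involutive: "\<And>a. f (f a) = a"
begin

lemma reduce_cons_cancel: "reduced f w \<Longrightarrow> reduce_cons f a (reduce_cons f (f a) w) = w"
proof (cases w)
  case (Cons b w')
  assume "reduced f w"
  then show ?thesis using Cons involutive by (cases w') auto
qed simp

lemma reduce_append_reduce: "reduce f (u @ reduce f v) = reduce f (u @ v)"
  by (induction u) (auto simp: reduce_reduced reduced_reduce)

lemma reduce_cancel_pair: "reduce f (u @ [a, f a] @ v) = reduce f (u @ v)"
proof -
  have "reduce f ([a, f a] @ v) = reduce f v"
    by (simp add: reduce_cons_cancel reduced_reduce)
  then show ?thesis by (metis reduce_append_reduce)
qed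

lemma reduce_reduce_cons_append:
  "reduced f r \<Longrightarrow> reduce f (reduce_cons f a r @ v) = reduce_cons f a (reduce f (r @ v))"
proof (cases r)
  case (Cons b r')
  show ?thesis
  proof (cases "b = f a")
    case True
    then show ?thesis
      using Cons reduce_cons_cancel[OF reduced_reduce] by simp
  qed (use Cons in simp)
qed simp

lemma reduce_reduce_append: "reduce f (reduce f u @ v) = reduce f (u @ v)"
  by (induction u) (simp_all add: reduce_reduce_cons_append reduced_reduce)

lemma reduce_word_inv_cancel: "reduce f (rev (map f x) @ x @ z) = reduce f z"
proof (induction x)
  case (Cons a x)
  have "reduce f (rev (map f (a # x)) @ (a # x) @ z)
      = reduce f (rev (map f x) @ [f a, f (f a)] @ x @ z)"
    using involutive by simp
  also have "\<dots> = reduce f (rev (map f x) @ x @ z)" by (rule reduce_cancel_pair)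
  finally show ?case using Cons by simp
qed simp

lemma reduced_rev_map: "reduced f x \<Longrightarrow> reduced f (rev (map f x))"
proof (induction x rule: induct_list012)
  case (3 a b w)
  then have "reduced f (rev (map f (b # w)) @ [f a])"
    by (intro reduced_append) (auto simp: involutive simp del: rev_map)
  then show ?case by simp
qed auto

lemma reduce_word_inv_append:
  "reduced f x \<Longrightarrow> reduced f y \<Longrightarrow>
   reduce f (rev (map f x) @ y) = rev (map f (drop (lcp x y) x)) @ drop (lcp x y) y"
proof (induction x y rule: lcp.induct)
  case (1 a x b y)
  show ?case
  proof (cases "a = b")
    case True
    have "reduce f (rev (map f (a # x)) @ b # y) = reduce f (rev (map f x) @ [f a, f (f a)] @ y)"
      using True involutive by simp
    also have "\<dots> = reduce f (rev (map f x) @ y)" by (rule reduce_cancel_pair)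
    finally show ?thesis using 1 True reduced_Cons_tl[of f b x] reduced_Cons_tl[of f b y] by auto
  next
    case False
    have "reduced f (rev (map f (a # x)) @ b # y)"
      by (rule reduced_append) (use reduced_rev_map[OF "1.prems"(1)] "1.prems"(2) False involutive in auto)
    then show ?thesis using False by (simp add: reduce_reduced)
  qed
qed (simp_all add: reduce_reduced reduced_rev_map del: rev_map)

end

section \<open>Conditionally negative definite kernels from trees\<close>

definition prefix_dist :: "'b list \<Rightarrow> 'b list \<Rightarrow> nat" where
  "prefix_dist x y = length x + length y - 2 * lcp x y"

lemma (in involution) length_reduce_word_inv_append:
  "reduced f x \<Longrightarrow> reduced f y \<Longrightarrow> length (reduce f (rev (map f x) @ y)) = prefix_dist x y"
  using reduce_word_inv_append lcp_le[of x y] by (simp add: prefix_dist_def)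

definition nonempty_prefixes :: "'b list \<Rightarrow> 'b list set" where
  "nonempty_prefixes z = (\<lambda>i. take i z) ` {1..length z}"

lemma finite_nonempty_prefixes [simp]: "finite (nonempty_prefixes z)"
  by (simp add: nonempty_prefixes_def)

lemma self_in_nonempty_prefixes: "z \<noteq> [] \<Longrightarrow> z \<in> nonempty_prefixes z"
  unfolding nonempty_prefixes_def by (rule image_eqI[of _ _ "length z"]) (auto simp: Suc_le_eq)

lemma nonempty_prefixes_Int:
  "nonempty_prefixes x \<inter> nonempty_prefixes y = (\<lambda>i. take i x) ` {1..lcp x y}"
proof (intro equalityI subsetI)
  fix w assume "w \<in> nonempty_prefixes x \<inter> nonempty_prefixes y"
  then obtain i j where i: "1 \<le> i" "i \<le> length x" "w = take i x"
    and j: "j \<le> length y" "w = take j y"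
    by (auto simp: nonempty_prefixes_def)
  then have "i = j" by (metis length_take min.absorb2)
  then have "i \<le> lcp x y" using i j le_lcp_if_take_eq by metis
  then show "w \<in> (\<lambda>i. take i x) ` {1..lcp x y}" using i by auto
next
  fix w assume "w \<in> (\<lambda>i. take i x) ` {1..lcp x y}"
  then obtain i where i: "1 \<le> i" "i \<le> lcp x y" "w = take i x" by auto
  have "take i x = take i y" using take_lcp[of x y] i(2) by (metis min.absorb1 take_take)
  then show "w \<in> nonempty_prefixes x \<inter> nonempty_prefixes y"
    using i lcp_le[of x y] unfolding nonempty_prefixes_def by force
qed

lemma inj_on_take: "n \<le> length x \<Longrightarrow> inj_on (\<lambda>i. take i x) {1..n}"
  by (intro inj_onI) (metis atLeastAtMost_iff length_take min.absorb2 order_trans)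

lemma card_nonempty_prefixes: "card (nonempty_prefixes z) = length z"
  using card_image[OF inj_on_take[of "length z" z]] by (simp add: nonempty_prefixes_def)

lemma card_nonempty_prefixes_Int: "card (nonempty_prefixes x \<inter> nonempty_prefixes y) = lcp x y"
  using card_image[OF inj_on_take[OF lcp_le(1)]] by (simp add: nonempty_prefixes_Int)

lemma prefix_dist_eq_sum_separating:
  assumes "finite P" "nonempty_prefixes x \<subseteq> P" "nonempty_prefixes y \<subseteq> P"
  shows "(of_nat (prefix_dist x y) :: complex)
       = (\<Sum>w\<in>P. if (w \<in> nonempty_prefixes x) \<noteq> (w \<in> nonempty_prefixes y) then 1 else 0)"
proof -
  let ?X = "nonempty_prefixes x" and ?Y = "nonempty_prefixes y"
  have sep: "(if (w \<in> ?X) \<noteq> (w \<in> ?Y) then 1 else 0 :: complex)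
     = (if w \<in> ?X then 1 else 0) + (if w \<in> ?Y then 1 else 0) - 2 * (if w \<in> ?X \<inter> ?Y then 1 else 0)" for w
    by auto
  have count: "(\<Sum>w\<in>P. if w \<in> B then 1 else 0 :: complex) = of_nat (card B)" if "B \<subseteq> P" for B
    using that assms(1) by (simp add: sum.If_cases Int_absorb2 Int_commute)
  have "2 * lcp x y \<le> length x + length y" using lcp_le[of x y] by simp
  then show ?thesis
    unfolding sep sum_subtractf sum.distrib sum_distrib_left[symmetric] prefix_dist_def
    using assms count[of ?X] count[of ?Y] count[of "?X \<inter> ?Y"]
    by (simp add: card_nonempty_prefixes card_nonempty_prefixes_Int of_nat_diff Int_absorb2 le_infI1)
qed

lemma sum_cut_kernel:
  fixes c :: "'x \<Rightarrow> complex"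
  assumes "finite F" "(\<Sum>x\<in>F. c x) = 0"
  shows "(\<Sum>x\<in>F. \<Sum>y\<in>F. c x * cnj (c y) * (if (x \<in> A) \<noteq> (y \<in> A) then 1 else 0))
         = - 2 * of_real ((cmod (\<Sum>x\<in>F \<inter> A. c x))\<^sup>2)"
proof -
  define i where "i x = (if x \<in> A then (1::complex) else 0)" for x
  have cut: "(if (x \<in> A) \<noteq> (y \<in> A) then 1 else 0) = i x + i y - 2 * i x * i y" for x y
    by (simp add: i_def)
  define C where "C = (\<Sum>x\<in>F. c x * i x)"
  have C: "C = (\<Sum>x\<in>F \<inter> A. c x)"
    unfolding C_def i_def using assms(1) by (simp add: sum.inter_restrict if_distrib cong: if_cong)
  have cnj_C: "(\<Sum>y\<in>F. cnj (c y) * i y) = cnj C"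
    by (simp add: C_def i_def cnj_sum if_distrib cong: if_cong)
  have "(\<Sum>x\<in>F. \<Sum>y\<in>F. c x * cnj (c y) * (if (x \<in> A) \<noteq> (y \<in> A) then 1 else 0))
      = (\<Sum>x\<in>F. \<Sum>y\<in>F. (c x * i x) * cnj (c y) + c x * (cnj (c y) * i y)
                              - 2 * ((c x * i x) * (cnj (c y) * i y)))"
    unfolding cut by (intro sum.cong HOL.refl) (simp add: algebra_simps)
  also have "\<dots> = C * cnj (\<Sum>y\<in>F. c y) + (\<Sum>x\<in>F. c x) * cnj C - 2 * (C * cnj C)"
  proof -
    have "C * cnj (\<Sum>y\<in>F. c y) = (\<Sum>x\<in>F. \<Sum>y\<in>F. (c x * i x) * cnj (c y))"
      "(\<Sum>x\<in>F. c x) * cnj C = (\<Sum>x\<in>F. \<Sum>y\<in>F. c x * (cnj (c y) * i y))"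
      "C * cnj C = (\<Sum>x\<in>F. \<Sum>y\<in>F. (c x * i x) * (cnj (c y) * i y))"
      unfolding cnj_C[symmetric] unfolding cnj_sum C_def by (simp_all only: sum_product)
    then show ?thesis by (simp only: sum.distrib sum_subtractf sum_distrib_left)
  qed
  also have "C * cnj C = of_real ((cmod C)\<^sup>2)"
    by (rule complex_norm_square[symmetric])
  finally show ?thesis using assms(2) C by simp
qed

lemma cond_strict_neg_def_cong:
  assumes "\<And>x y. x \<in> X \<Longrightarrow> y \<in> X \<Longrightarrow> K x y = K' x y"
  shows "cond_strict_neg_def X K \<longleftrightarrow> cond_strict_neg_def X K'"
proof -
  have "(\<Sum>x\<in>F. \<Sum>y\<in>F. c x * cnj (c y) * K x y) = (\<Sum>x\<in>F. \<Sum>y\<in>F. c x * cnj (c y) * K' x y)"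
    if "F \<subseteq> X" for F and c :: "_ \<Rightarrow> complex"
    using that assms by (intro sum.cong HOL.refl) auto
  then show ?thesis
    unfolding cond_strict_neg_def_def by (intro iff_allI imp_cong HOL.refl) (simp add: Let_def)
qed

lemma quadrilateral_not_cond_strict_neg:
  fixes d :: "'x \<Rightarrow> 'x \<Rightarrow> nat"
  assumes X: "{e, a, b, v} \<subseteq> X" and dist: "distinct [e, a, b, v]"
    and sym: "\<And>x y. x \<in> {e, a, b, v} \<Longrightarrow> y \<in> {e, a, b, v} \<Longrightarrow> d x y = d y x"
    and self: "\<And>x. x \<in> {e, a, b, v} \<Longrightarrow> d x x = 0"
    and diagonals: "d e a + d a b + d b v + d v e \<le> d e b + d a v"
  shows "\<not> cond_strict_neg_def X (\<lambda>x y. of_nat (d x y))"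
proof
  assume csnd: "cond_strict_neg_def X (\<lambda>x y. of_nat (d x y))"
  from dist have ne: "e \<noteq> a" "e \<noteq> b" "e \<noteq> v" "a \<noteq> b" "a \<noteq> v" "b \<noteq> v"
    "a \<noteq> e" "b \<noteq> e" "v \<noteq> e" "b \<noteq> a" "v \<noteq> a" "v \<noteq> b" by auto
  define w :: "'x \<Rightarrow> real" where "w x = (if x = e \<or> x = b then 1 else if x = a \<or> x = v then -1 else 0)" for x
  have supp: "{x. complex_of_real (w x) \<noteq> 0} = {e, a, b, v}"
    using ne by (auto simp: w_def)
  have "(\<Sum>x\<in>{e, a, b, v}. complex_of_real (w x)) = 0"
    using ne by (simp add: w_def)
  moreover define Q where "Q = (\<Sum>x\<in>{e, a, b, v}. \<Sum>y\<in>{e, a, b, v}. of_real (w x) * cnj (of_real (w y)) * of_nat (d x y))"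
  ultimately have "Re Q < 0"
    using csnd[unfolded cond_strict_neg_def_def, THEN spec, of "\<lambda>x. complex_of_real (w x)"] X supp
    by (simp add: Let_def) (metis one_neq_zero w_def)
  moreover have "Re Q = 2 * (real (d e b) + real (d a v) - real (d e a) - real (d a b) - real (d b v) - real (d v e))"
    using ne sym[of e a] sym[of e b] sym[of e v] sym[of a b] sym[of a v] sym[of b v] self
    by (simp add: Q_def w_def)
  moreover have "real (d e a) + real (d a b) + real (d b v) + real (d v e) \<le> real (d e b) + real (d a v)"
    using diagonals by (metis of_nat_add of_nat_le_iff)
  ultimately show False by argo
qed

lemma prefix_dist_quadratic_form:
  fixes c :: "'x \<Rightarrow> complex" and \<phi> :: "'x \<Rightarrow> 'b list"
  assumes F: "finite F" and sum0: "(\<Sum>x\<in>F. c x) = 0"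
  defines "P \<equiv> \<Union>x\<in>F. nonempty_prefixes (\<phi> x)"
  shows "(\<Sum>x\<in>F. \<Sum>y\<in>F. c x * cnj (c y) * of_nat (prefix_dist (\<phi> x) (\<phi> y)))
       = of_real (- 2 * (\<Sum>w\<in>P. (cmod (\<Sum>x\<in>{x\<in>F. w \<in> nonempty_prefixes (\<phi> x)}. c x))\<^sup>2))"
proof -
  define A where "A w = {x. w \<in> nonempty_prefixes (\<phi> x)}" for w
  have "finite P" using F by (simp add: P_def)
  have "(\<Sum>x\<in>F. \<Sum>y\<in>F. c x * cnj (c y) * of_nat (prefix_dist (\<phi> x) (\<phi> y)))
     = (\<Sum>x\<in>F. \<Sum>y\<in>F. \<Sum>w\<in>P. c x * cnj (c y) * (if (x \<in> A w) \<noteq> (y \<in> A w) then 1 else 0))"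
  proof (intro sum.cong HOL.refl)
    fix x y assume "x \<in> F" "y \<in> F"
    then have "nonempty_prefixes (\<phi> x) \<subseteq> P" "nonempty_prefixes (\<phi> y) \<subseteq> P"
      by (auto simp: P_def)
    then show "c x * cnj (c y) * of_nat (prefix_dist (\<phi> x) (\<phi> y))
       = (\<Sum>w\<in>P. c x * cnj (c y) * (if (x \<in> A w) \<noteq> (y \<in> A w) then 1 else 0))"
      by (simp add: prefix_dist_eq_sum_separating[OF \<open>finite P\<close>] sum_distrib_left A_def)
  qed
  also have "\<dots> = (\<Sum>w\<in>P. \<Sum>x\<in>F. \<Sum>y\<in>F. c x * cnj (c y) * (if (x \<in> A w) \<noteq> (y \<in> A w) then 1 else 0))"
    by (subst sum.swap) (rule sum.cong[OF HOL.refl sum.swap])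
  also have "\<dots> = (\<Sum>w\<in>P. - 2 * of_real ((cmod (\<Sum>x\<in>F \<inter> A w. c x))\<^sup>2))"
    by (intro sum.cong HOL.refl sum_cut_kernel[OF F sum0])
  finally show ?thesis
    by (simp add: sum_distrib_left A_def Int_def conj_commute)
qed

lemma sum_prefix_weights_pos:
  fixes c :: "'x \<Rightarrow> complex" and \<phi> :: "'x \<Rightarrow> 'b list"
  assumes F: "finite F" "F \<noteq> {}" and inj: "inj_on \<phi> F"
    and nonzero: "\<And>x. x \<in> F \<Longrightarrow> c x \<noteq> 0" and sum0: "(\<Sum>x\<in>F. c x) = 0"
  shows "(\<Sum>w\<in>(\<Union>x\<in>F. nonempty_prefixes (\<phi> x)). (cmod (\<Sum>x\<in>{x\<in>F. w \<in> nonempty_prefixes (\<phi> x)}. c x))\<^sup>2) > 0"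
proof -
  obtain x0 where x0: "x0 \<in> F" and "Max ((\<lambda>x. length (\<phi> x)) ` F) = length (\<phi> x0)"
    using obtains_MAX[OF F] .
  then have longest: "length (\<phi> x) \<le> length (\<phi> x0)" if "x \<in> F" for x
    using F(1) that by (metis Max_ge finite_imageI imageI)
  have "\<phi> x0 \<noteq> []"
  proof
    assume "\<phi> x0 = []"
    then have "F = {x0}" using longest x0 inj by (auto simp: inj_on_def)
    then show False using sum0 nonzero[OF x0] by simp
  qed
  have "{x\<in>F. \<phi> x0 \<in> nonempty_prefixes (\<phi> x)} = {x0}"
  proof (intro equalityI subsetI)
    fix x assume "x \<in> {x\<in>F. \<phi> x0 \<in> nonempty_prefixes (\<phi> x)}"
    then obtain i where "x \<in> F" "i \<le> length (\<phi> x)" "\<phi> x0 = take i (\<phi> x)"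
      by (auto simp: nonempty_prefixes_def)
    then have "\<phi> x0 = \<phi> x" using longest by (metis antisym length_take min.absorb2 take_all)
    then show "x \<in> {x0}" using inj \<open>x \<in> F\<close> x0 by (auto simp: inj_on_def)
  qed (use x0 self_in_nonempty_prefixes[OF \<open>\<phi> x0 \<noteq> []\<close>] in auto)
  then have "(cmod (\<Sum>x\<in>{x\<in>F. \<phi> x0 \<in> nonempty_prefixes (\<phi> x)}. c x))\<^sup>2 > 0"
    using nonzero[OF x0] by simp
  moreover have "\<phi> x0 \<in> (\<Union>x\<in>F. nonempty_prefixes (\<phi> x))"
    using x0 self_in_nonempty_prefixes[OF \<open>\<phi> x0 \<noteq> []\<close>] by auto
  ultimately show ?thesis
    using F(1) by (intro sum_pos2) auto
qed

lemma prefix_dist_cond_strict_neg: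
  fixes \<phi> :: "'x \<Rightarrow> 'b list"
  assumes "inj_on \<phi> X"
  shows "cond_strict_neg_def X (\<lambda>x y. of_nat (prefix_dist (\<phi> x) (\<phi> y)))"
  unfolding cond_strict_neg_def_def Let_def
proof (intro allI impI)
  fix c :: "'x \<Rightarrow> complex"
  define F where "F = {x. c x \<noteq> 0}"
  assume "finite {x. c x \<noteq> 0} \<and> {x. c x \<noteq> 0} \<subseteq> X \<and> {x. c x \<noteq> 0} \<noteq> {} \<and> (\<Sum>x\<in>{x. c x \<noteq> 0}. c x) = 0"
  then have F: "finite F" "F \<subseteq> X" "F \<noteq> {}" and sum0: "(\<Sum>x\<in>F. c x) = 0"
    by (simp_all add: F_def)
  have "inj_on \<phi> F" using assms F(2) inj_on_subset by blast
  then show "(\<Sum>x\<in>F. \<Sum>y\<in>F. c x * cnj (c y) * of_nat (prefix_dist (\<phi> x) (\<phi> y))) \<in> \<real> \<and>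
    Re (\<Sum>x\<in>F. \<Sum>y\<in>F. c x * cnj (c y) * of_nat (prefix_dist (\<phi> x) (\<phi> y))) < 0"
    using sum_prefix_weights_pos[OF F(1,3)] sum0
    unfolding prefix_dist_quadratic_form[OF F(1) sum0] by (simp add: F_def)
qed

section \<open>Free presentations\<close>

text \<open>A presentation in which every word has a normal form given by free reduction with respect
  to the involution \<open>f\<close> on letters, after each letter \<open>a\<close> is replaced by its representative
  \<open>\<kappa> a\<close>: for free groups \<open>\<kappa>\<close> is the identity and \<open>f\<close> inverts letters, for free Coxeter groups
  \<open>\<kappa>\<close> forgets exponents and \<open>f\<close> is the identity.\<close>

locale free_presentation = involution f for f :: "'a \<times> bool \<Rightarrow> 'a \<times> bool" +
  fixes S :: "'a set" and R :: "('a word \<times> 'a word) set" and \<kappa> :: "'a \<times> bool \<Rightarrow> 'a \<times> bool"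
  assumes \<kappa>_inv_letter: "\<And>s b. \<kappa> (s, \<not> b) = f (\<kappa> (s, b))"
    and reduce_rels: "\<And>l r. (l, r) \<in> R \<Longrightarrow> reduce f (map \<kappa> l) = reduce f (map \<kappa> r)"
    and pres_eq_\<kappa>: "\<And>a. fst a \<in> S \<Longrightarrow> pres_eq R [a] [\<kappa> a]"
    and pres_eq_\<kappa>_pair: "\<And>a. fst a \<in> S \<Longrightarrow> pres_eq R [\<kappa> a, f (\<kappa> a)] []"
    and fst_\<kappa>: "\<And>a. fst (\<kappa> a) = fst a"
    and fst_f: "\<And>a. fst (f a) = fst a"
begin

definition nf :: "'a word \<Rightarrow> 'a word" where
  "nf w = reduce f (map \<kappa> w)"

lemma reduced_nf: "reduced f (nf u)"
  by (simp add: nf_def reduced_reduce)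

lemma word_over_map_\<kappa> [simp]: "word_over S (map \<kappa> w) \<longleftrightarrow> word_over S w"
  by (simp add: word_over_def image_image fst_\<kappa>)

lemma word_over_rev_map_f [simp]: "word_over S (rev (map f w)) \<longleftrightarrow> word_over S w"
  by (simp add: word_over_def image_image fst_f)

lemma word_over_nf: "word_over S u \<Longrightarrow> word_over S (nf u)"
  unfolding nf_def by (rule word_over_mono[OF set_reduce]) simp

lemma nf_eq_if_pres_eq: "pres_eq R u v \<Longrightarrow> nf u = nf v"
proof (induction rule: pres_eq.induct)
  case (cancel u s b v)
  then show ?case
    using reduce_cancel_pair[of "map \<kappa> u" "\<kappa> (s, b)" "map \<kappa> v"] by (simp add: nf_def \<kappa>_inv_letter)
next
  case (rel l r u v)
  have "reduce f (map \<kappa> u @ map \<kappa> l @ map \<kappa> v) = reduce f (map \<kappa> u @ reduce f (reduce f (map \<kappa> l) @ map \<kappa> v))"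
    by (simp add: reduce_reduce_append reduce_append_reduce)
  also have "\<dots> = reduce f (map \<kappa> u @ map \<kappa> r @ map \<kappa> v)"
    by (simp add: reduce_rels[OF rel] reduce_reduce_append reduce_append_reduce)
  finally show ?case by (simp add: nf_def)
qed auto

lemma pres_eq_nf: "word_over S u \<Longrightarrow> pres_eq R u (nf u)"
proof (induction u)
  case (Cons a u)
  then have IH: "pres_eq R ([a] @ u) ([\<kappa> a] @ nf u)"
    by (intro pres_eq_append pres_eq_\<kappa>) auto
  show ?case
  proof (cases "nf u")
    case (Cons b w)
    show ?thesis
    proof (cases "b = f (\<kappa> a)")
      case True
      have "pres_eq R ([\<kappa> a, f (\<kappa> a)] @ w) ([] @ w)"
        using Cons.prems by (intro pres_eq_append_right pres_eq_\<kappa>_pair) simp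
      with IH have "pres_eq R (a # u) w"
        using Cons True by (simp add: pres_eq.trans)
      then show ?thesis using Cons True by (simp add: nf_def)
    qed (use IH Cons in \<open>simp add: nf_def\<close>)
  qed (use IH in \<open>simp add: nf_def\<close>)
qed (simp add: nf_def)

lemma pres_eq_rev_map_cancel:
  "set z \<subseteq> \<kappa> ` {a. fst a \<in> S} \<Longrightarrow> pres_eq R (z @ rev (map f z)) []"
proof (induction z)
  case (Cons b z)
  then obtain a where a: "fst a \<in> S" "b = \<kappa> a" by auto
  have "pres_eq R ([b] @ (z @ rev (map f z)) @ [f b]) ([b] @ [] @ [f b])"
    using Cons by (intro pres_eq_context) auto
  also have "pres_eq R ([b] @ [] @ [f b]) []"
    using pres_eq_\<kappa>_pair[OF a(1)] a(2) by simp
  finally show ?case by simp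
qed simp

lemma nf_append_reduce_quotient:
  assumes "word_over S u" "word_over S v"
  defines "q \<equiv> reduce f (rev (map f (nf u)) @ nf v)"
  shows "word_over S q" and "pres_eq R (nf u @ q) (nf v)"
proof -
  define x y p where "x = nf u" and "y = nf v" and "p = lcp x y"
  have q: "q = rev (map f (drop p x)) @ drop p y"
    unfolding q_def x_def y_def p_def by (rule reduce_word_inv_append[OF reduced_nf reduced_nf])
  have x: "word_over S x" and y: "word_over S y"
    using word_over_nf assms(1,2) by (simp_all add: x_def y_def)
  show "word_over S q"
    using word_over_mono[OF set_drop_subset x] word_over_mono[OF set_drop_subset y] by (simp add: q)
  have "set (drop p x) \<subseteq> \<kappa> ` {a. fst a \<in> S}"
    using set_reduce[of f "map \<kappa> u"] assms(1) set_drop_subset[of p x]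
    unfolding x_def nf_def word_over_def by fastforce
  then have "pres_eq R (take p x @ (drop p x @ rev (map f (drop p x))) @ drop p y) (take p x @ [] @ drop p y)"
    by (intro pres_eq_context pres_eq_rev_map_cancel)
  moreover have "take p x @ drop p y = y"
    using take_lcp[of x y] unfolding p_def by simp
  ultimately show "pres_eq R (nf u @ q) (nf v)"
    unfolding x_def[symmetric] y_def[symmetric] q by simp (metis append.assoc append_take_drop_id)
qed

lemma word_dist_word_class_eq_prefix_dist:
  assumes u: "word_over S u" and v: "word_over S v"
  shows "word_dist R S (word_class R S u) (word_class R S v) = prefix_dist (nf u) (nf v)"
proof -
  define q where "q = reduce f (rev (map f (nf u)) @ nf v)"
  have "word_dist R S (word_class R S (nf u)) (word_class R S (nf v)) \<le> length q"
    using nf_append_reduce_quotient[OF u v, folded q_def] word_over_nf u v by (intro word_dist_le)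
  moreover have "word_class R S (nf u) = word_class R S u" "word_class R S (nf v) = word_class R S v"
    using pres_eq_nf u v word_class_eq pres_eq.sym by metis+
  moreover have "length q \<le> word_dist R S (word_class R S u) (word_class R S v)"
  proof (rule word_dist_ge[OF u v])
    fix w assume "pres_eq R (u @ w) v"
    then have "nf v = reduce f (nf u @ map \<kappa> w)"
      using nf_eq_if_pres_eq unfolding nf_def by (metis map_append reduce_reduce_append)
    then have "q = reduce f (map \<kappa> w)"
      by (simp add: q_def reduce_append_reduce reduce_word_inv_cancel)
    then show "length q \<le> length w" using length_reduce[of f "map \<kappa> w"] by simp
  qed
  moreover have "length q = prefix_dist (nf u) (nf v)"
    unfolding q_def by (rule length_reduce_word_inv_append[OF reduced_nf reduced_nf])
  ultimately show ?thesis by simp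
qed

theorem free_presentation_cond_strict_neg:
  "cond_strict_neg_def (group_elems R S) (\<lambda>g h. of_nat (word_dist R S g h))"
proof -
  define \<phi> where "\<phi> g = the_elem (nf ` g)" for g
  have \<phi>: "\<phi> (word_class R S u) = nf u" if "word_over S u" for u
  proof -
    have "nf ` word_class R S u = {nf u}"
      using that pres_eq_nf[OF that]
      by (auto simp: word_class_def intro: nf_eq_if_pres_eq[symmetric] image_eqI[of _ _ u])
    then show ?thesis by (simp add: \<phi>_def)
  qed
  have "inj_on \<phi> (group_elems R S)"
  proof (rule inj_onI)
    fix g h assume "g \<in> group_elems R S" "h \<in> group_elems R S" "\<phi> g = \<phi> h"
    then obtain u v where "word_over S u" "word_over S v" "g = word_class R S u" "h = word_class R S v"
      and "nf u = nf v" by (metis group_elemsE \<phi>)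
    then show "g = h"
      using pres_eq_nf word_class_eq by (metis pres_eq.sym pres_eq.trans)
  qed
  then have "cond_strict_neg_def (group_elems R S) (\<lambda>g h. of_nat (prefix_dist (\<phi> g) (\<phi> h)))"
    by (rule prefix_dist_cond_strict_neg)
  moreover have "word_dist R S g h = prefix_dist (\<phi> g) (\<phi> h)"
    if "g \<in> group_elems R S" "h \<in> group_elems R S" for g h
    using that by (elim group_elemsE) (simp add: \<phi> word_dist_word_class_eq_prefix_dist)
  ultimately show ?thesis
    by (subst cond_strict_neg_def_cong) simp_all
qed

end

section \<open>Reflections in Coxeter groups\<close>

lemma length_alt [simp]: "length (alt s t n) = n"
  by (induction n arbitrary: s t) auto

lemma alt_add: "alt s t (i + j) = alt s t i @ (if even i then alt s t j else alt t s j)"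
  by (induction i arbitrary: s t) auto

lemma alt_nth: "i < n \<Longrightarrow> alt s t n ! i = (if even i then (s, True) else (t, True))"
  by (induction n arbitrary: s t i) (auto simp: nth_Cons split: nat.splits)

lemma take_alt: "i \<le> n \<Longrightarrow> take i (alt s t n) = alt s t i"
  by (induction n arbitrary: s t i) (auto simp: take_Cons split: nat.splits)

lemma rev_alt: "rev (alt s t n) = (if odd n then alt s t n else alt t s n)"
proof (induction n arbitrary: s t)
  case (Suc n)
  have "alt s t (Suc n) = alt s t n @ (if even n then alt s t 1 else alt t s 1)"
    using alt_add[of s t n 1] by simp
  then show ?case using Suc[of s t] by auto
qed simp

lemma alt_odd: "alt s t (2 * i + 1) = alt s t i @ [(if even i then s else t, True)] @ rev (alt s t i)"
  using alt_add[of s t i "Suc i"] rev_alt[of s t i] by (auto simp: mult_2)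

lemma word_over_alt: "s \<in> S \<Longrightarrow> t \<in> S \<Longrightarrow> word_over S (alt s t n)"
  by (induction n arbitrary: s t) auto

definition positive_word :: "'a word \<Rightarrow> 'a word" where
  "positive_word w = map (\<lambda>a. (fst a, True)) w"

lemma positive_word_word_inv: "positive_word (word_inv w) = rev (positive_word w)"
  by (simp add: positive_word_def word_inv_def rev_map)

lemma positive_word_alt [simp]: "positive_word (alt s t n) = alt s t n"
  by (induction n arbitrary: s t) (auto simp: positive_word_def)

definition conjugate :: "'a word \<Rightarrow> 'a word \<Rightarrow> 'a word" where
  "conjugate u t = u @ t @ word_inv u"

text \<open>The reflections crossed by the gallery of a word, themselves written as words.\<close>

fun reflections :: "'a word \<Rightarrow> 'a word list" where
  "reflections [] = []"
| "reflections (a # w) = [(fst a, True)] # map (conjugate [a]) (reflections w)"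

lemma length_reflections [simp]: "length (reflections w) = length w"
  by (induction w) auto

lemma reflections_append: "reflections (u @ w) = reflections u @ map (conjugate u) (reflections w)"
  by (induction u) (auto simp: conjugate_def)

lemma reflections_nth:
  "i < length w \<Longrightarrow> reflections w ! i = conjugate (take i w) [(fst (w ! i), True)]"
proof (induction w arbitrary: i)
  case (Cons a w)
  then show ?case by (cases i) (auto simp: conjugate_def)
qed simp

lemma card_ge_if_disjoint_family:
  assumes "finite A" and "\<And>i. i < k \<Longrightarrow> J i \<noteq> {} \<and> J i \<subseteq> A"
    and "\<And>i i'. i < k \<Longrightarrow> i' < k \<Longrightarrow> i \<noteq> i' \<Longrightarrow> J i \<inter> J i' = {}"
  shows "k \<le> card A"
proof -
  have fin: "finite (J i)" if "i < k" for i
    using assms(1) assms(2)[OF that] finite_subset by blast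
  then have "k \<le> (\<Sum>i<k. card (J i))"
    using sum_mono[of "{..<k}" "\<lambda>_. 1::nat" "\<lambda>i. card (J i)"] assms(2) by (simp add: Suc_le_eq card_gt_0_iff)
  also have "\<dots> = card (\<Union>i<k. J i)"
    using assms(3) fin by (intro card_UN_disjoint[symmetric]) auto
  also have "\<dots> \<le> card A"
    using assms(1,2) by (intro card_mono) auto
  finally show ?thesis .
qed

lemma length_filter_eq_if_nth:
  assumes "length xs = length ys" "\<And>i. i < length xs \<Longrightarrow> P (xs ! i) = P (ys ! i)"
  shows "length (filter P xs) = length (filter P ys)"
  using assms by (auto simp: length_filter_conv_card intro!: arg_cong[where f = card])

locale coxeter_presentation =
  fixes S :: "'a set" and m :: "'a \<Rightarrow> 'a \<Rightarrow> enat"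
begin

abbreviation coxeter_eq (infix "\<approx>" 50) where
  "x \<approx> y \<equiv> pres_eq (coxeter_rels S m) x y"

lemma pres_eq_square: "s \<in> S \<Longrightarrow> [(s, True), (s, True)] \<approx> []"
  using pres_eq.rel[of "[(s, True), (s, True)]" "[]" "coxeter_rels S m" "[]" "[]"]
  by (simp add: coxeter_rels_def)

lemma pres_eq_positive_letter: "s \<in> S \<Longrightarrow> [(s, b)] \<approx> [(s, True)]"
proof (cases b)
  case False
  assume s: "s \<in> S"
  have "[(s, False)] @ [] \<approx> [(s, False)] @ [(s, True), (s, True)]"
    by (rule pres_eq_append_left, rule pres_eq.sym, rule pres_eq_square[OF s])
  also have "[(s, False)] @ [(s, True), (s, True)] = [] @ [(s, False), (s, \<not> False)] @ [(s, True)]"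
    by simp
  also have "\<dots> \<approx> [] @ [(s, True)]" by (rule pres_eq.cancel)
  finally show ?thesis using False by simp
qed simp

lemma pres_eq_positive_word: "word_over S w \<Longrightarrow> w \<approx> positive_word w"
proof (induction w)
  case (Cons a w)
  then have "[a] @ w \<approx> [(fst a, True)] @ positive_word w"
    using pres_eq_positive_letter[of "fst a" "snd a"] by (intro pres_eq_append) auto
  then show ?case by (simp add: positive_word_def)
qed (simp add: positive_word_def)

lemma word_inv_alt_pres_eq_rev: "s \<in> S \<Longrightarrow> t \<in> S \<Longrightarrow> word_inv (alt s t n) \<approx> rev (alt s t n)"
  using pres_eq_positive_word[of "word_inv (alt s t n)"] word_over_alt[of s S t n]
  by (simp add: positive_word_word_inv)

lemma conjugate_pres_eq_iff: "conjugate u t \<approx> z \<longleftrightarrow> t \<approx> conjugate (word_inv u) z"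
proof
  assume "conjugate u t \<approx> z"
  then have "word_inv u @ (u @ t @ word_inv u) @ u \<approx> word_inv u @ z @ u"
    unfolding conjugate_def by (rule pres_eq_context)
  moreover have "(word_inv u @ u) @ t @ (word_inv u @ u) \<approx> [] @ t @ []"
    by (intro pres_eq_append pres_eq_word_inv_left pres_eq.refl)
  ultimately show "t \<approx> conjugate (word_inv u) z"
    unfolding conjugate_def by simp (meson pres_eq.sym pres_eq.trans)
next
  assume "t \<approx> conjugate (word_inv u) z"
  then have "u @ t @ word_inv u \<approx> u @ (word_inv u @ z @ u) @ word_inv u"
    unfolding conjugate_def word_inv_word_inv by (rule pres_eq_context)
  moreover have "(u @ word_inv u) @ z @ (u @ word_inv u) \<approx> [] @ z @ []"
    by (intro pres_eq_append pres_eq_word_inv_right pres_eq.refl)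
  ultimately show "conjugate u t \<approx> z"
    unfolding conjugate_def by simp (meson pres_eq.trans)
qed

lemma conjugate_conjugate [simp]: "conjugate u (conjugate x t) = conjugate (u @ x) t"
  by (simp add: conjugate_def)

lemma conjugate_append_pres_eq: "x \<approx> y \<Longrightarrow> conjugate (u @ x) t \<approx> conjugate (u @ y) t"
  unfolding conjugate_def
  by (intro pres_eq_append pres_eq_append_left pres_eq_word_inv pres_eq.refl)

text \<open>Tits' reflection-counting argument: the parity of the number of entries of
  \<open>reflections w\<close> equal to \<open>z\<close> in the Coxeter group depends only on the element represented by \<open>w\<close>.\<close>

definition reflection_count :: "'a word \<Rightarrow> 'a word \<Rightarrow> nat" where
  "reflection_count w z = length (filter (\<lambda>t. t \<approx> z) (reflections w))"

lemma reflection_count_split: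
  "reflection_count (u @ x @ v) z = reflection_count u z + reflection_count x (conjugate (word_inv u) z)
    + length (filter (\<lambda>t. conjugate (u @ x) t \<approx> z) (reflections v))"
proof -
  have "filter (\<lambda>t. conjugate u t \<approx> z) (reflections x)
      = filter (\<lambda>t. t \<approx> conjugate (word_inv u) z) (reflections x)"
    by (rule filter_cong[OF HOL.refl]) (rule conjugate_pres_eq_iff)
  then show ?thesis
    by (simp add: reflection_count_def reflections_append filter_map o_def)
qed

lemma even_reflection_count_context:
  assumes "x \<approx> y" and "\<And>z. even (reflection_count x z) = even (reflection_count y z)"
  shows "even (reflection_count (u @ x @ v) z) = even (reflection_count (u @ y @ v) z)"
proof -
  have "filter (\<lambda>t. conjugate (u @ x) t \<approx> z) (reflections v)
      = filter (\<lambda>t. conjugate (u @ y) t \<approx> z) (reflections v)"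
    by (intro filter_cong HOL.refl)
      (meson pres_eq.trans pres_eq.sym conjugate_append_pres_eq[OF \<open>x \<approx> y\<close>])
  then show ?thesis using assms(2)[of "conjugate (word_inv u) z"] by (simp add: reflection_count_split)
qed

lemma even_reflection_count_cancel: "even (reflection_count [(s, b), (s, \<not> b)] z)"
proof -
  have "[(s, b), (s, True), (s, \<not> b)] \<approx> [(s, True)]"
    using pres_eq.cancel[of "coxeter_rels S m" "[]" s b "[(s, True)]"]
      pres_eq.cancel[of "coxeter_rels S m" "[(s, True)]" s b "[]"]
    by (cases b) simp_all
  then have "[(s, True)] \<approx> z \<longleftrightarrow> [(s, b), (s, True), (s, \<not> b)] \<approx> z"
    by (meson pres_eq.sym pres_eq.trans)
  then show ?thesis
    by (simp add: reflection_count_def conjugate_def inv_letter_def)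
qed

lemma reflections_alt_nth:
  assumes "s \<in> S" "t \<in> S" "i < k"
  shows "reflections (alt s t k) ! i \<approx> alt s t (2 * i + 1)"
proof -
  have "reflections (alt s t k) ! i = alt s t i @ [(if even i then s else t, True)] @ word_inv (alt s t i)"
    using assms(3) by (simp add: reflections_nth take_alt alt_nth conjugate_def)
  also have "\<dots> \<approx> alt s t i @ [(if even i then s else t, True)] @ rev (alt s t i)"
    by (intro pres_eq_append_left word_inv_alt_pres_eq_rev assms(1,2))
  finally show ?thesis by (simp only: alt_odd)
qed

text \<open>Under the braid relation, the \<open>i\<close>-th reflection of \<open>alt s t k\<close> is the \<open>(k - 1 - i)\<close>-th one
  of \<open>alt t s k\<close>.\<close>

lemma alt_odd_pres_eq_mirror:
  assumes st: "s \<in> S" "t \<in> S" and "i < k" and braid: "alt s t k \<approx> alt t s k"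
  shows "alt s t (2 * i + 1) \<approx> alt t s (2 * (k - 1 - i) + 1)"
proof -
  define a where "a = alt s t (2 * i + 1)"
  define b where "b = alt t s (2 * (k - 1 - i) + 1)"
  have "a @ b = alt s t (2 * i + 1 + (2 * (k - 1 - i) + 1))"
    unfolding a_def b_def alt_add[of s t "2 * i + 1"] by simp
  also have "2 * i + 1 + (2 * (k - 1 - i) + 1) = k + k" using \<open>i < k\<close> by simp
  also have "alt s t (k + k) = alt s t k @ rev (alt t s k)"
    unfolding alt_add rev_alt by simp
  also have "\<dots> \<approx> alt t s k @ word_inv (alt t s k)"
    by (rule pres_eq_append[OF braid pres_eq.sym[OF word_inv_alt_pres_eq_rev[OF st(2,1)]]])
  also have "\<dots> \<approx> []" by (rule pres_eq_word_inv_right)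
  finally have "a @ b \<approx> []" .
  then have "(a @ b) @ word_inv b \<approx> [] @ word_inv b" by (rule pres_eq_append_right)
  moreover have "a @ b @ word_inv b \<approx> a @ []"
    by (rule pres_eq_append_left[OF pres_eq_word_inv_right])
  moreover have "rev b = b"
    unfolding b_def rev_alt by simp
  then have "word_inv b \<approx> b"
    using word_inv_alt_pres_eq_rev[OF st(2,1), of "2 * (k - 1 - i) + 1", folded b_def] by simp
  ultimately show ?thesis
    unfolding a_def[symmetric] b_def[symmetric] by simp (meson pres_eq.sym pres_eq.trans)
qed

lemma reflection_count_braid:
  assumes st: "s \<in> S" "t \<in> S" and braid: "alt s t k \<approx> alt t s k"
  shows "reflection_count (alt s t k) z = reflection_count (alt t s k) z"
proof -
  have "length (filter (\<lambda>t. t \<approx> z) (reflections (alt s t k)))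
      = length (filter (\<lambda>t. t \<approx> z) (rev (reflections (alt t s k))))"
  proof (rule length_filter_eq_if_nth)
    fix i assume "i < length (reflections (alt s t k))"
    then have i: "i < k" by simp
    have "reflections (alt s t k) ! i \<approx> alt s t (2 * i + 1)"
      by (rule reflections_alt_nth[OF st i])
    also have "\<dots> \<approx> alt t s (2 * (k - 1 - i) + 1)"
      by (rule alt_odd_pres_eq_mirror[OF st i braid])
    also have "\<dots> \<approx> rev (reflections (alt t s k)) ! i"
      using i reflections_alt_nth[OF st(2,1), of "k - 1 - i" k] by (simp add: rev_nth pres_eq.sym)
    finally show "(reflections (alt s t k) ! i \<approx> z) = (rev (reflections (alt t s k)) ! i \<approx> z)"
      by (meson pres_eq.trans pres_eq.sym)
  qed simp
  then show ?thesis by (simp add: reflection_count_def rev_filter[symmetric])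
qed

lemma even_reflection_count_pres_eq: "x \<approx> y \<Longrightarrow> even (reflection_count x z) \<longleftrightarrow> even (reflection_count y z)"
proof (induction arbitrary: z rule: pres_eq.induct)
  case (cancel u s b v)
  have "[(s, b), (s, \<not> b)] \<approx> []"
    using pres_eq.cancel[of "coxeter_rels S m" "[]" s b "[]"] by simp
  then have "even (reflection_count (u @ [(s, b), (s, \<not> b)] @ v) z) = even (reflection_count (u @ [] @ v) z)"
    using even_reflection_count_cancel by (intro even_reflection_count_context) (simp_all add: reflection_count_def)
  then show ?case by simp
next
  case (rel l r u v)
  have lr: "l \<approx> r" using pres_eq.rel[OF rel, of "[]" "[]"] by simp
  from rel consider s where "s \<in> S" "l = [(s, True), (s, True)]" "r = []"
    | s t k where "s \<in> S" "t \<in> S" "l = alt s t k" "r = alt t s k"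
    unfolding coxeter_rels_def artin_rels_def by blast
  then have "even (reflection_count l z) = even (reflection_count r z)" for z
  proof cases
    case (1 s)
    have "reflections [(s, True), (s, True)] = reflections [(s, True), (s, \<not> True)]"
      by (simp add: conjugate_def inv_letter_def)
    then show ?thesis
      using 1 even_reflection_count_cancel[of s True z] by (simp add: reflection_count_def)
  next
    case (2 s t k)
    then show ?thesis using reflection_count_braid[of s t k z] lr by simp
  qed
  then show ?case using lr by (intro even_reflection_count_context)
qed simp_all

text \<open>If the reflections \<open>alt s t (2 * i + 1)\<close>, \<open>i < k\<close>, are pairwise distinct, each occurs exactly once in
  \<open>reflections (alt s t k)\<close>, hence an odd number of times in \<open>reflections w\<close> for every \<open>w\<close>
  representing the same element, which therefore has length at least \<open>k\<close>.\<close>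

lemma length_ge_if_distinct_reflections:
  assumes st: "s \<in> S" "t \<in> S" and braid: "alt s t k \<approx> alt t s k"
    and distinct: "\<And>i j. i < k \<Longrightarrow> j < k \<Longrightarrow> alt s t (2 * i + 1) \<approx> alt s t (2 * j + 1) \<Longrightarrow> i = j"
    and w: "w \<approx> alt s t k"
  shows "k \<le> length w"
proof -
  define z where "z i = alt s t (2 * i + 1)" for i
  define J where "J i = {j. j < length w \<and> reflections w ! j \<approx> z i}" for i
  have z_inj: "i = j" if "i < k" "j < k" "z i \<approx> z j" for i j
    using distinct that unfolding z_def by blast
  have z_nth: "reflections (alt s t k) ! i \<approx> z i" if "i < k" for i
    unfolding z_def using st that by (rule reflections_alt_nth)
  have z_cong: "z i \<approx> z j" if "x \<approx> z i" "x \<approx> z j" for x i j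
    using that by (meson pres_eq.sym pres_eq.trans)
  have "{j. j < k \<and> reflections (alt s t k) ! j \<approx> z i} = {i}" if "i < k" for i
    using that z_inj z_nth z_cong by blast
  then have "reflection_count (alt s t k) (z i) = 1" if "i < k" for i
    using that by (simp add: reflection_count_def length_filter_conv_card)
  then have "odd (card (J i))" if "i < k" for i
    using that even_reflection_count_pres_eq[OF w, of "z i"]
    by (simp add: reflection_count_def length_filter_conv_card J_def)
  then have "J i \<noteq> {} \<and> J i \<subseteq> {..<length w}" if "i < k" for i
    using that by (intro conjI) (metis card.empty dvd_0_right, auto simp: J_def)
  moreover have "J i \<inter> J i' = {}" if "i < k" "i' < k" "i \<noteq> i'" for i i'
    using that z_inj z_cong unfolding J_def by blast
  ultimately have "k \<le> card {..<length w}"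
    by (intro card_ge_if_disjoint_family) simp_all
  then show ?thesis by simp
qed

end

section \<open>The geometric representation\<close>

text \<open>In the geometric representation of a dihedral group generated by \<open>s\<close>, \<open>t\<close> with \<open>m s t = k\<close>,
  the element \<open>s t\<close> acts on the pair \<open>(B(\<alpha>\<^sub>s, v), B(\<alpha>\<^sub>t, v))\<close> by the following matrix with \<open>c = cos (\<pi> / k)\<close>,
  of trace \<open>2 cos (2\<pi> / k)\<close> and determinant \<open>1\<close>, i.e. conjugate to the rotation by \<open>2\<pi> / k\<close>.\<close>

definition rotation_step :: "real \<Rightarrow> real \<times> real \<Rightarrow> real \<times> real" where
  "rotation_step c z = (- fst z - 2 * c * snd z, 2 * c * fst z + (4 * c\<^sup>2 - 1) * snd z)"

lemma sin_mult_add_one: "sin ((real j + 1) * p) = 2 * cos p * sin (real j * p) - sin ((real j - 1) * p)"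
proof -
  have "sin (real j * p + p) + sin (real j * p - p) = 2 * sin (real j * p) * cos p"
    by (simp add: sin_add sin_diff)
  then show ?thesis by (simp add: algebra_simps)
qed

text \<open>Cayley--Hamilton for \<open>rotation_step c\<close> turns its powers into the Chebyshev recursion.\<close>

lemma funpow_rotation_step:
  assumes "sin p \<noteq> 0" and c: "cos p = 2 * c\<^sup>2 - 1"
  shows "(rotation_step c ^^ j) z =
     (sin (real j * p) / sin p * fst (rotation_step c z) - sin ((real j - 1) * p) / sin p * fst z,
      sin (real j * p) / sin p * snd (rotation_step c z) - sin ((real j - 1) * p) / sin p * snd z)"
proof (induction j)
  case 0
  then show ?case using assms(1) by simp
next
  case (Suc j)
  define A where "A = sin (real j * p) / sin p"
  define B where "B = sin ((real j - 1) * p) / sin p"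
  have "sin (real (Suc j) * p) = (4 * c\<^sup>2 - 2) * sin (real j * p) - sin ((real j - 1) * p)"
    using sin_mult_add_one[of j p] unfolding c by (simp add: algebra_simps)
  then have A': "sin (real (Suc j) * p) / sin p = (4 * c\<^sup>2 - 2) * A - B"
    unfolding A_def B_def by (simp add: diff_divide_distrib)
  have B': "sin ((real (Suc j) - 1) * p) / sin p = A"
    by (simp add: A_def)
  show ?case
    using Suc unfolding A' B' A_def[symmetric] B_def[symmetric]
    by (simp add: rotation_step_def algebra_simps power2_eq_square)
qed

lemma
  assumes "(n::nat) \<ge> 2"
  shows cos_pi_div_nonneg: "cos (pi / n) \<ge> 0"
    and cos_pi_div_less_one: "cos (pi / n) < 1"
proof -
  have "0 < pi / n" using assms by simp
  moreover have "pi / n \<le> pi / 2" using assms by (intro divide_left_mono) auto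
  ultimately show "cos (pi / n) \<ge> 0" by (intro cos_ge_zero) auto
  have "sin (pi / n) \<noteq> 0"
    using \<open>0 < pi / n\<close> \<open>pi / n \<le> pi / 2\<close> pi_gt_zero
    by (intro order.strict_implies_not_eq[symmetric] sin_gt_zero) linarith+
  then have "cos (pi / n) \<noteq> 1" using cos_one_sin_zero by blast
  then show "cos (pi / n) < 1" using cos_le_one[of "pi / n"] by linarith
qed

lemma funpow_rotation_step_period:
  assumes "(n::nat) \<ge> 2"
  shows "(rotation_step (cos (pi / n)) ^^ n) z = z"
proof (cases "n = 2")
  case True
  then show ?thesis by (simp add: rotation_step_def numeral_2_eq_2)
next
  case False
  then have n: "real n \<ge> 3" using assms by simp
  define p where "p = 2 * pi / n"
  have "sin p > 0" using n by (intro sin_gt_zero) (auto simp: p_def field_simps)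
  moreover have "cos p = 2 * (cos (pi / n))\<^sup>2 - 1"
    using cos_double_cos[of "pi / n"] by (simp add: p_def times_divide_eq_right)
  moreover have "real n * p = 2 * pi" "(real n - 1) * p = 2 * pi - p"
    using n by (simp_all add: p_def field_simps)
  ultimately show ?thesis
    using funpow_rotation_step[of p "cos (pi / n)" n z] by (simp add: sin_diff)
qed

lemma funpow_rotation_step_fixed_point:
  assumes p: "sin p > 0" "cos p = 2 * c\<^sup>2 - 1" and c: "0 < c" "c < 1"
    and fixed: "(rotation_step c ^^ d) (1, - c) = (1, - c)"
  shows "sin (real d * p) = 0" and "sin ((real d - 1) * p) = - sin p"
proof -
  define U where "U = sin (real d * p) / sin p"
  define V where "V = sin ((real d - 1) * p) / sin p"
  have "(rotation_step c ^^ d) (1, - c) = (U * (2 * c\<^sup>2 - 1) - V, U * (3 * c - 4 * c ^ 3) + V * c)"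
    using p by (simp add: funpow_rotation_step[of p c d] U_def V_def
        rotation_step_def power2_eq_square power3_eq_cube algebra_simps)
  then have e1: "U * (2 * c\<^sup>2 - 1) - V = 1" and e2: "U * (3 * c - 4 * c ^ 3) + V * c = - c"
    using fixed by simp_all
  have "U * (2 * c * (1 - c\<^sup>2)) = c * (U * (2 * c\<^sup>2 - 1) - V) + (U * (3 * c - 4 * c ^ 3) + V * c)"
    by (simp add: algebra_simps power2_eq_square power3_eq_cube)
  moreover have "c\<^sup>2 < 1\<^sup>2" using c by (intro power_strict_mono) auto
  ultimately have "U = 0" using e1 e2 c by simp
  then show "sin (real d * p) = 0" using p by (simp add: U_def)
  show "sin ((real d - 1) * p) = - sin p" using e1 \<open>U = 0\<close> p by (simp add: V_def field_simps)
qed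

lemma funpow_rotation_step_not_fixed:
  assumes k: "(k::nat) \<ge> 2" and d: "0 < d" "d < k"
  shows "(rotation_step (cos (pi / k)) ^^ d) (1, - cos (pi / k)) \<noteq> (1, - cos (pi / k))"
proof (cases "k = 2")
  case True
  then have "d = 1" using d by simp
  then show ?thesis using True by (simp add: rotation_step_def)
next
  case False
  then have k3: "real k \<ge> 3" using k by simp
  define p where "p = 2 * pi / k"
  have p: "0 < p" "p < pi" using k3 by (auto simp: p_def field_simps)
  then have "sin p > 0" by (rule sin_gt_zero)
  have cos_p: "cos p = 2 * (cos (pi / k))\<^sup>2 - 1"
    using cos_double_cos[of "pi / k"] by (simp add: p_def times_divide_eq_right)
  have c: "0 < cos (pi / k)" using k3 by (intro cos_gt_zero) (auto simp: field_simps)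
  show ?thesis
  proof
    assume "(rotation_step (cos (pi / k)) ^^ d) (1, - cos (pi / k)) = (1, - cos (pi / k))"
    note fixed = funpow_rotation_step_fixed_point[OF \<open>sin p > 0\<close> cos_p c cos_pi_div_less_one[OF k] this]
    from fixed(1) obtain i :: int where i: "real d * p = i * pi"
      using sin_zero_iff_int2 by blast
    have "0 < real d * p" "real d * p < 2 * pi"
      using d p k3 by (auto simp: p_def field_simps)
    then have "0 < real_of_int i" "real_of_int i < 2"
      unfolding i by (simp_all add: zero_less_mult_iff)
    then have "(real d - 1) * p = pi - p"
      using i by (simp add: left_diff_distrib)
    then show False using fixed(2) \<open>sin p > 0\<close> by simp
  qed
qed

locale coxeter_geometric = coxeter_presentation +
  assumes finite_S: "finite S" and coxeter_matrix: "coxeter_matrix S m"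
begin

lemma braid_length_ge_2: "s \<in> S \<Longrightarrow> t \<in> S \<Longrightarrow> s \<noteq> t \<Longrightarrow> m s t = enat k \<Longrightarrow> k \<ge> 2"
  using coxeter_matrix unfolding coxeter_matrix_def by (metis enat_ord_simps(1) numeral_eq_enat)

text \<open>The Tits representation on \<open>'a \<Rightarrow> real\<close>: \<open>bilin_coeff r q\<close> is \<open>B(\<alpha>\<^sub>r, \<alpha>\<^sub>q)\<close> and \<open>bilin r v\<close>
  is \<open>B(\<alpha>\<^sub>r, v)\<close>.\<close>

definition bilin_coeff :: "'a \<Rightarrow> 'a \<Rightarrow> real" where
  "bilin_coeff r q = (if r = q then 1 else (case m r q of enat n \<Rightarrow> - cos (pi / real n) | \<infinity> \<Rightarrow> -1))"

definition bilin :: "'a \<Rightarrow> ('a \<Rightarrow> real) \<Rightarrow> real" where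
  "bilin r v = (\<Sum>q\<in>S. bilin_coeff r q * v q)"

definition simple_root :: "'a \<Rightarrow> 'a \<Rightarrow> real" where
  "simple_root r = (\<lambda>x. if x = r then 1 else 0)"

definition reflect :: "'a \<Rightarrow> ('a \<Rightarrow> real) \<Rightarrow> ('a \<Rightarrow> real)" where
  "reflect r v = (if r \<in> S then (\<lambda>x. v x - 2 * bilin r v * simple_root r x) else v)"

definition word_action :: "'a word \<Rightarrow> ('a \<Rightarrow> real) \<Rightarrow> ('a \<Rightarrow> real)" where
  "word_action w v = foldr (\<lambda>a. reflect (fst a)) w v"

lemma bilin_coeff_self [simp]: "bilin_coeff r r = 1"
  by (simp add: bilin_coeff_def)

lemma bilin_coeff_braid:
  assumes "s \<in> S" "t \<in> S" "s \<noteq> t" "m s t = enat k"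
  shows "bilin_coeff s t = - cos (pi / k)" "bilin_coeff t s = - cos (pi / k)"
  using assms coxeter_matrix by (auto simp: bilin_coeff_def coxeter_matrix_def)

lemma bilin_add_root: "q \<in> S \<Longrightarrow> bilin r (\<lambda>x. v x + a * simple_root q x) = bilin r v + a * bilin_coeff r q"
  by (simp add: bilin_def simple_root_def distrib_left sum.distrib finite_S if_distrib[of "(*) _"]
      cong: if_cong)

lemma bilin_add_roots:
  "q \<in> S \<Longrightarrow> q' \<in> S \<Longrightarrow>
   bilin r (\<lambda>x. v x + a * simple_root q x + b * simple_root q' x) = bilin r v + a * bilin_coeff r q + b * bilin_coeff r q'"
  using bilin_add_root[of q' r "\<lambda>x. v x + a * simple_root q x" b] bilin_add_root[of q r v a] by simp

lemma reflect_reflect [simp]: "reflect r (reflect r v) = v"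
proof (cases "r \<in> S")
  case True
  then have "bilin r (reflect r v) = - bilin r v"
    using bilin_add_root[OF True, of r v "- 2 * bilin r v"] by (simp add: reflect_def)
  then show ?thesis using True by (simp add: reflect_def fun_eq_iff)
qed (simp add: reflect_def)

lemma word_action_Nil [simp]: "word_action [] v = v"
  and word_action_Cons [simp]: "word_action (a # w) v = reflect (fst a) (word_action w v)"
  and word_action_append: "word_action (u @ w) v = word_action u (word_action w v)"
  by (simp_all add: word_action_def)

lemma word_action_rev: "word_action (rev w) (word_action w v) = v"
  by (induction w arbitrary: v) (simp_all add: word_action_append)

lemma word_action_alt_even:
  assumes st: "s \<in> S" "t \<in> S" "s \<noteq> t" and k: "m s t = enat k"
  shows "\<exists>a b. word_action (alt s t (2 * j)) v = (\<lambda>x. v x + a * simple_root s x + b * simple_root t x)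
     \<and> (bilin s (word_action (alt s t (2 * j)) v), bilin t (word_action (alt s t (2 * j)) v))
         = (rotation_step (cos (pi / k)) ^^ j) (bilin s v, bilin t v)"
proof (induction j)
  case (Suc j)
  define c where "c = cos (pi / k)"
  from Suc obtain a b where ab: "word_action (alt s t (2 * j)) v = (\<lambda>x. v x + a * simple_root s x + b * simple_root t x)"
    and rot: "(bilin s (word_action (alt s t (2 * j)) v), bilin t (word_action (alt s t (2 * j)) v))
       = (rotation_step c ^^ j) (bilin s v, bilin t v)"
    by (auto simp: c_def)
  define u where "u = word_action (alt s t (2 * j)) v"
  define x where "x = bilin s u"
  define y where "y = bilin t u"
  define u1 where "u1 = (\<lambda>z. u z + (- 2 * y) * simple_root t z)"
  define u2 where "u2 = (\<lambda>z. u1 z + (- 2 * (x + 2 * c * y)) * simple_root s z)"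
  have u1: "bilin s u1 = x + 2 * c * y" "bilin t u1 = - y"
    using bilin_add_root[OF st(2), of _ u "- 2 * y"] bilin_coeff_braid[OF st k]
    by (simp_all add: u1_def x_def y_def c_def)
  have action: "word_action (alt s t (2 * Suc j)) v = u2"
    using st u1 by (simp add: u2_def u1_def u_def x_def y_def reflect_def fun_eq_iff algebra_simps)
  have "u2 = (\<lambda>z. v z + (a - 2 * (x + 2 * c * y)) * simple_root s z + (b - 2 * y) * simple_root t z)"
    unfolding u2_def u1_def u_def ab by (simp add: fun_eq_iff algebra_simps)
  moreover have "bilin s u2 = - (x + 2 * c * y)" "bilin t u2 = - y + 2 * c * (x + 2 * c * y)"
    using bilin_add_root[OF st(1), of s u1 "- 2 * (x + 2 * c * y)", folded u2_def]
      bilin_add_root[OF st(1), of t u1 "- 2 * (x + 2 * c * y)", folded u2_def] u1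
      bilin_coeff_braid[OF st k]
    by (simp_all add: c_def algebra_simps)
  then have "(bilin s u2, bilin t u2) = rotation_step c (x, y)"
    by (simp add: rotation_step_def algebra_simps power2_eq_square)
  moreover have "(rotation_step c ^^ j) (bilin s v, bilin t v) = (x, y)"
    unfolding x_def y_def u_def rot[symmetric] ..
  ultimately show ?case
    unfolding action c_def[symmetric] by auto
qed (intro exI[of _ 0]; simp)

lemma word_action_alt_period:
  assumes st: "s \<in> S" "t \<in> S" "s \<noteq> t" and k: "m s t = enat k"
  shows "word_action (alt s t (2 * k)) v = v"
proof -
  define c where "c = cos (pi / k)"
  have k2: "k \<ge> 2" by (rule braid_length_ge_2[OF st k])
  obtain a b where ab: "word_action (alt s t (2 * k)) v = (\<lambda>x. v x + a * simple_root s x + b * simple_root t x)"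
    and rot: "(bilin s (word_action (alt s t (2 * k)) v), bilin t (word_action (alt s t (2 * k)) v))
      = (rotation_step c ^^ k) (bilin s v, bilin t v)"
    using word_action_alt_even[OF st k, of k v] by (auto simp: c_def)
  have "bilin s (word_action (alt s t (2 * k)) v) = bilin s v"
    "bilin t (word_action (alt s t (2 * k)) v) = bilin t v"
    using rot funpow_rotation_step_period[OF k2] by (simp_all add: c_def)
  moreover have "bilin s (word_action (alt s t (2 * k)) v) = bilin s v + a - c * b"
    "bilin t (word_action (alt s t (2 * k)) v) = bilin t v - c * a + b"
    unfolding ab bilin_add_roots[OF st(1,2)] bilin_coeff_braid[OF st k] c_def by simp_all
  ultimately have "a - c * b = 0" "b - c * a = 0" by linarith+
  moreover have "c \<ge> 0" "c < 1"
    using cos_pi_div_nonneg[OF k2] cos_pi_div_less_one[OF k2] by (simp_all add: c_def)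
  then have "c * c < 1 * 1" by (intro mult_strict_mono) auto
  ultimately have "b * (1 - c * c) = 0" "a = c * b"
    by (simp_all add: algebra_simps)
  then have "a = 0" "b = 0" using \<open>c * c < 1 * 1\<close> by simp_all
  then show ?thesis using ab by simp
qed

lemma word_action_braid:
  assumes "s \<in> S" "t \<in> S" "s \<noteq> t" "m s t = enat k"
  shows "word_action (alt s t k) v = word_action (alt t s k) v"
proof -
  have "alt s t (2 * k) = alt s t k @ rev (alt t s k)"
    unfolding mult_2 alt_add rev_alt by simp
  then have "word_action (alt s t k) v = word_action (alt s t (2 * k)) (word_action (alt t s k) v)"
    by (simp add: word_action_append word_action_rev)
  then show ?thesis by (simp add: word_action_alt_period[OF assms])
qed

lemma word_action_pres_eq: "x \<approx> y \<Longrightarrow> word_action x v = word_action y v"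
proof (induction arbitrary: v rule: pres_eq.induct)
  case (cancel u s b w)
  then show ?case by (simp add: word_action_append)
next
  case (rel l r u w)
  from rel consider s where "s \<in> S" "l = [(s, True), (s, True)]" "r = []"
    | s t k where "s \<in> S" "t \<in> S" "s \<noteq> t" "m s t = enat k" "l = alt s t k" "r = alt t s k"
    unfolding coxeter_rels_def artin_rels_def by blast
  then have "word_action l v' = word_action r v'" for v'
    by cases (simp, use word_action_braid in blast)
  then show ?case by (simp add: word_action_append)
qed simp_all

text \<open>The rotation \<open>(s t)\<^sup>d\<close> moves \<open>\<alpha>\<^sub>s\<close> for \<open>0 < d < m s t\<close>.\<close>

lemma alt_even_not_pres_eq_Nil:
  assumes st: "s \<in> S" "t \<in> S" "s \<noteq> t" and k: "m s t = enat k" and d: "0 < d" "d < k"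
  shows "\<not> alt s t (2 * d) \<approx> []"
proof
  assume "alt s t (2 * d) \<approx> []"
  then have fixed: "word_action (alt s t (2 * d)) (simple_root s) = simple_root s"
    using word_action_pres_eq by fastforce
  have "(bilin s (word_action (alt s t (2 * d)) (simple_root s)), bilin t (word_action (alt s t (2 * d)) (simple_root s)))
      = (rotation_step (cos (pi / k)) ^^ d) (bilin s (simple_root s), bilin t (simple_root s))"
    using word_action_alt_even[OF st k, of d "simple_root s"] by blast
  moreover have "bilin s (simple_root s) = 1" "bilin t (simple_root s) = - cos (pi / k)"
    using bilin_add_root[OF st(1), of _ "\<lambda>x. 0" 1] bilin_coeff_braid[OF st k]
    by (simp_all add: bilin_def)
  ultimately show False
    using funpow_rotation_step_not_fixed[OF braid_length_ge_2[OF st k] d] fixed by simp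
qed

lemma alt_odd_distinct:
  assumes st: "s \<in> S" "t \<in> S" "s \<noteq> t" and k: "m s t = enat k"
    and ij: "i < k" "j < k" and eq: "alt s t (2 * i + 1) \<approx> alt s t (2 * j + 1)"
  shows "i = j"
proof (rule ccontr)
  assume "i \<noteq> j"
  have "alt s t (2 * i + 1) \<approx> alt s t (2 * j + 1) \<Longrightarrow> i < j \<Longrightarrow> j < k \<Longrightarrow> False" for i j
  proof -
    assume eq: "alt s t (2 * i + 1) \<approx> alt s t (2 * j + 1)" and "i < j" "j < k"
    have "alt s t (2 * j + 1) = alt s t (2 * (j - i)) @ alt s t (2 * i + 1)"
      using alt_add[of s t "2 * (j - i)" "2 * i + 1"] \<open>i < j\<close> by (simp add: algebra_simps)
    then have "[] @ alt s t (2 * i + 1) \<approx> alt s t (2 * (j - i)) @ alt s t (2 * i + 1)"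
      using eq by simp
    then have "alt s t (2 * (j - i)) \<approx> []"
      by (rule pres_eq_cancel_right[THEN pres_eq.sym])
    then show False
      using alt_even_not_pres_eq_Nil[OF st k, of "j - i"] \<open>i < j\<close> \<open>j < k\<close> by simp
  qed
  then show False
    using eq ij \<open>i \<noteq> j\<close> by (metis linorder_neqE_nat pres_eq.sym)
qed

lemma length_ge_braid_length:
  assumes st: "s \<in> S" "t \<in> S" "s \<noteq> t" and k: "m s t = enat k" and w: "w \<approx> alt s t k"
  shows "k \<le> length w"
proof (rule length_ge_if_distinct_reflections[OF st(1,2) _ _ w])
  show "alt s t k \<approx> alt t s k"
    using pres_eq.rel[of "alt s t k" "alt t s k" "coxeter_rels S m" "[]" "[]"] st k
    by (auto simp: coxeter_rels_def artin_rels_def)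
qed (rule alt_odd_distinct[OF st k])

section \<open>Braid relations obstruct strict negativity\<close>

lemma braid_quadrilateral_diagonals:
  assumes R: "R \<subseteq> coxeter_rels S m"
    and st: "s \<in> S" "t \<in> S" "s \<noteq> t" and k: "m s t = enat k"
  defines "D u v \<equiv> word_dist R S (word_class R S u) (word_class R S v)"
  shows "k \<le> D [] (alt s t k)" and "k \<le> D [(s, True)] (alt t s (k - 1))"
proof -
  have coxeter: "x \<approx> y" if "pres_eq R x y" for x y
    using pres_eq_mono[OF that R] .
  have "k \<ge> 2" by (rule braid_length_ge_2[OF st k])
  then have split: "alt s t k = [(s, True)] @ alt t s (k - 1)"
    by (cases k) auto
  show "k \<le> D [] (alt s t k)"
    unfolding D_def using st
    by (intro word_dist_ge word_over_alt) (auto intro: length_ge_braid_length[OF st k] coxeter)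
  show "k \<le> D [(s, True)] (alt t s (k - 1))"
    unfolding D_def
  proof (rule word_dist_ge)
    fix w assume "pres_eq R ([(s, True)] @ w) (alt t s (k - 1))"
    then have "w \<approx> [(s, False)] @ alt t s (k - 1)"
      using pres_eq_move_left coxeter by (fastforce simp: inv_letter_def)
    also have "[(s, False)] @ alt t s (k - 1) \<approx> alt s t k"
      unfolding split by (intro pres_eq_append_right pres_eq_positive_letter st)
    finally show "k \<le> length w" by (rule length_ge_braid_length[OF st k])
  qed (use st in \<open>simp_all add: word_over_alt\<close>)
qed

lemma braid_quadrilateral_sides:
  assumes R: "artin_rels S m \<subseteq> R"
    and st: "s \<in> S" "t \<in> S" "s \<noteq> t" and k: "m s t = enat k"
  defines "D u v \<equiv> word_dist R S (word_class R S u) (word_class R S v)"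
  shows "D [] [(s, True)] \<le> 1" and "D [(s, True)] (alt s t k) \<le> k - 1"
    and "D (alt s t k) (alt t s (k - 1)) \<le> 1" and "D [] (alt t s (k - 1)) \<le> k - 1"
proof -
  have "k \<ge> 2" by (rule braid_length_ge_2[OF st k])
  then have split: "alt s t k = [(s, True)] @ alt t s (k - 1)"
    by (cases k) auto
  have words: "word_over S (alt s t k)" "word_over S (alt t s (k - 1))" "word_over S [(s, True)]"
    using st by (simp_all add: word_over_alt)
  show "D [] [(s, True)] \<le> 1"
    unfolding D_def using word_dist_le[OF _ words(3) words(3), of "[]" R] by simp
  show "D [(s, True)] (alt s t k) \<le> k - 1"
    unfolding D_def using word_dist_le[OF words(3,1,2), of R] split by simp
  show "D [] (alt t s (k - 1)) \<le> k - 1"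
    unfolding D_def using word_dist_le[OF _ words(2,2), of "[]" R] by simp
  obtain x where x: "alt t s k = alt t s (k - 1) @ [x]" "fst x \<in> S"
    using \<open>k \<ge> 2\<close> st alt_add[of t s "k - 1" 1] by (cases "even (k - 1)") force+
  have "pres_eq R (alt s t k) (alt t s k)"
    using pres_eq.rel[of "alt s t k" "alt t s k" R "[]" "[]"] R st k by (auto simp: artin_rels_def)
  then have "pres_eq R (alt s t k @ [inv_letter x]) (alt t s (k - 1) @ [x, inv_letter x])"
    using x(1) pres_eq_append_right by fastforce
  also have "pres_eq R (alt t s (k - 1) @ [x, inv_letter x]) (alt t s (k - 1) @ [])"
    by (intro pres_eq_append_left pres_eq_inv_letter)
  finally show "D (alt s t k) (alt t s (k - 1)) \<le> 1"
    unfolding D_def using word_dist_le[OF words(1,2), of "[inv_letter x]" R] x(2) by simp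
qed

theorem braid_not_cond_strict_neg:
  assumes R: "artin_rels S m \<subseteq> R" "R \<subseteq> coxeter_rels S m"
    and st: "s \<in> S" "t \<in> S" "s \<noteq> t" and k: "m s t = enat k"
  shows "\<not> cond_strict_neg_def (group_elems R S) (\<lambda>g h. of_nat (word_dist R S g h))"
proof -
  define e a b v where "e = word_class R S []" and "a = word_class R S [(s, True)]"
    and "b = word_class R S (alt s t k)" and "v = word_class R S (alt t s (k - 1))"
  note bounds = braid_quadrilateral_diagonals[OF R(2) st k, folded e_def a_def b_def v_def]
    braid_quadrilateral_sides[OF R(1) st k, folded e_def a_def b_def v_def]
  have k2: "k \<ge> 2" by (rule braid_length_ge_2[OF st k])
  have words: "word_over S []" "word_over S [(s, True)]" "word_over S (alt s t k)" "word_over S (alt t s (k - 1))"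
    using st by (simp_all add: word_over_alt)
  have classes: "\<exists>u. word_over S u \<and> x = word_class R S u" if "x \<in> {e, a, b, v}" for x
    using that words unfolding e_def a_def b_def v_def by blast
  have sym: "word_dist R S x y = word_dist R S y x" if "x \<in> {e, a, b, v}" "y \<in> {e, a, b, v}" for x y
    using classes[OF that(1)] classes[OF that(2)] word_dist_sym by metis
  have self: "word_dist R S x x = 0" if "x \<in> {e, a, b, v}" for x
    using classes[OF that] word_dist_self by metis
  have "{e, a, b, v} \<subseteq> group_elems R S"
    unfolding e_def a_def b_def v_def using words by (simp add: word_class_in_group_elems)
  moreover have "distinct [e, a, b, v]"
  proof -
    have "e \<noteq> a" using bounds(1,4) k2 by (intro notI) simp
    moreover have "e \<noteq> b" using bounds(1) k2 self[of e] by (intro notI) simp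
    moreover have "e \<noteq> v" using bounds(2,3) k2 sym[of a e] by (intro notI) simp
    moreover have "a \<noteq> b" using bounds(1,3) k2 by (intro notI) simp
    moreover have "a \<noteq> v" using bounds(2) k2 self[of a] by (intro notI) simp
    moreover have "b \<noteq> v" using bounds(2,4) k2 by (intro notI) simp
    ultimately show ?thesis by simp
  qed
  moreover have "word_dist R S v e = word_dist R S e v"
    by (rule sym) simp_all
  then have "word_dist R S e a + word_dist R S a b + word_dist R S b v + word_dist R S v e
      \<le> word_dist R S e b + word_dist R S a v"
    using bounds k2 by linarith
  ultimately show ?thesis
    using sym self by (intro quadrilateral_not_cond_strict_neg)
qed

end

lemma (in coxeter_presentation) free_coxeter_cond_strict_neg:
  assumes "artin_rels S m = {}"
  shows "cond_strict_neg_def (group_elems (coxeter_rels S m) S) (\<lambda>g h. of_nat (word_dist (coxeter_rels S m) S g h))"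
proof -
  have "reduce id (map (\<lambda>a. (fst a, True)) l) = reduce id (map (\<lambda>a. (fst a, True)) r)"
    if "(l, r) \<in> coxeter_rels S m" for l r
    using that assms by (auto simp: coxeter_rels_def)
  then interpret free_presentation id S "coxeter_rels S m" "\<lambda>a. (fst a, True)"
    by unfold_locales (auto simp: pres_eq_positive_letter pres_eq_square)
  show ?thesis by (rule free_presentation_cond_strict_neg)
qed

lemma free_group_cond_strict_neg:
  "cond_strict_neg_def (group_elems {} S) (\<lambda>g h. of_nat (word_dist {} S g h))"
proof -
  interpret free_presentation inv_letter S "{}" id
    by unfold_locales (auto simp: inv_letter_def pres_eq_inv_letter[of "{}", unfolded inv_letter_def])
  show ?thesis by (rule free_presentation_cond_strict_neg)
qed

theorem theorem2:
  fixes S :: "'a set" and m :: "'a \<Rightarrow> 'a \<Rightarrow> enat"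
  assumes "finite S" and "coxeter_matrix S m"
  shows "(cond_strict_neg_def (group_elems (coxeter_rels S m) S)
            (\<lambda>g h. of_nat (word_dist (coxeter_rels S m) S g h))
          \<longleftrightarrow> (\<forall>s\<in>S. \<forall>t\<in>S. s \<noteq> t \<longrightarrow> m s t = \<infinity>))
       \<and> (cond_strict_neg_def (group_elems (artin_rels S m) S)
            (\<lambda>g h. of_nat (word_dist (artin_rels S m) S g h))
          \<longleftrightarrow> (\<forall>s\<in>S. \<forall>t\<in>S. s \<noteq> t \<longrightarrow> m s t = \<infinity>))"
proof -
  interpret coxeter_geometric S m by unfold_locales fact+
  show ?thesis
  proof (cases "\<forall>s\<in>S. \<forall>t\<in>S. s \<noteq> t \<longrightarrow> m s t = \<infinity>")
    case True
    then have "artin_rels S m = {}" by (auto simp: artin_rels_def)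
    then show ?thesis
      using True free_coxeter_cond_strict_neg free_group_cond_strict_neg by simp
  next
    case False
    then obtain s t k where "s \<in> S" "t \<in> S" "s \<noteq> t" "m s t = enat k"
      by (metis enat.exhaust)
    then show ?thesis
      using False braid_not_cond_strict_neg[of _ s t k] by (auto simp: coxeter_rels_def)
  qed
qed

end
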